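(* Let $G$ be a group, $H\le G$ with $[G:H]=m$, and $f_1,\dots,f_s:H\to G$ homomorphisms such that $G$ is self-similar and finite-state with respect to the $G$-data $((m,\dots,m),(H,\dots,H),(f_1,\dots,f_s))$ ($s$ entries each). Consider the following two $G^s$-data: (1) $((m^s,\dots,m^s),(H^s,\dots,H^s),(\rho_1,\dots,\rho_s))$ ($s$ entries each), where for $j=1,\dots,s$ the homomorphism $\rho_j:H^s\to G^s$ is $(h_1,\dots,h_s)\mapsto(h_1^{f_{j}},h_2^{f_{j+1}},\dots,h_s^{f_{j+s-1}})$, indices of the $f$'s taken modulo $s$ in $\{1,\dots,s\}$; (2) $((m^s,1),(H^s,G^s),(\rho,\tau))$, where $\rho:H^s\to G^s$, $(h_1,\dots,h_s)\mapsto(h_1^{f_1},\dots,h_s^{f_s})$, and $\tau:G^s\to G^s$, $(g_1,\dots,g_s)\mapsto(g_s,g_1,\dots,g_{s-1})$. Then each of these data is simple and $G^s$ is finite-state with respect to each of them.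
   Context: For $m\ge2$, $\mathcal A_m$ is the automorphism group of the one-rooted $m$-regular tree; each $\alpha\in\mathcal A_m$ is written $\alpha=(\alpha_1,\dots,\alpha_m)\sigma(\alpha)$ with $\sigma(\alpha)\in S_m$ the first-level action and $\alpha_i$ the states; $Q(\alpha)=\{\alpha\}\cup\bigcup_iQ(\alpha_i)$, $\alpha$ is finite-state if $Q(\alpha)$ is finite, and $\mathcal F_m$ is the group of finite-state automorphisms. Conventions: maps written on the right ($h^f$). A $G$-data $(\mathbf m,\mathbf H,\mathbf F)$ consists of subgroups $H_1,\dots,H_s$ with $[G:H_i]=m_i$, $m=\sum m_i$, and homomorphisms (virtual endomorphisms) $f_i:H_i\to G$. Choosing right transversals $T_i$ of $H_i$, with $\theta_i(g,t)=tg(t')^{-1}$ where $H_it'=H_itg$ and $g^\sigma$ the permutation $t\mapsto t'$ of $T_1\sqcup\dots\sqcup T_s\cong\{1,\dots,m\}$, the data induces $\varphi:G\to\mathcal A_m$, $g^\varphi=((\theta_i(g,t)^{f_i})^\varphi\mid t\in T_i,1\le i\le s)\,g^\sigma$, whose kernel is the $\mathbf F$-core: the largest subgroup of $\bigcap_iH_i$ normal in $G$ and $f_i$-invariant for all $i$ ($K$ is $f$-invariant if $K\subseteq\mathrm{dom}(f)$ and $K^f\le K$). The data is simple if the $\mathbf F$-core is trivial; the group is then self-similar with respect to it, and it is finite-state with respect to it if for some choice of transversals its image under $\varphi$ lies in $\mathcal F_m$. *)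

theory Defs
  imports "HOL-Algebra.Algebra"
begin

(* A G-data is a list of triples (m_i, H_i, f_i): H_i a subgroup of G of index m_i
   (finite) and f_i : H_i -> G a homomorphism (virtual endomorphism). *)
definition G_data :: "('a, 'b) monoid_scheme \<Rightarrow> (nat \<times> 'a set \<times> ('a \<Rightarrow> 'a)) list \<Rightarrow> bool" where
  "G_data G D \<longleftrightarrow> group G \<and>
     (\<forall>i < length D. subgroup (fst (snd (D!i))) G
        \<and> finite (rcosets\<^bsub>G\<^esub> (fst (snd (D!i))))
        \<and> card (rcosets\<^bsub>G\<^esub> (fst (snd (D!i)))) = fst (D!i)
        \<and> snd (snd (D!i)) \<in> hom (G\<lparr>carrier := fst (snd (D!i))\<rparr>) G)"

definition Fcore_cand :: "('a, 'b) monoid_scheme \<Rightarrow> (nat \<times> 'a set \<times> ('a \<Rightarrow> 'a)) list \<Rightarrow> 'a set \<Rightarrow> bool" where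
  "Fcore_cand G D K \<longleftrightarrow> subgroup K G \<and> K \<subseteq> (\<Inter>i<length D. fst (snd (D!i))) \<and> K \<lhd> G \<and>
     (\<forall>i < length D. K \<subseteq> fst (snd (D!i)) \<and> snd (snd (D!i)) ` K \<subseteq> K)"

definition is_Fcore :: "('a, 'b) monoid_scheme \<Rightarrow> (nat \<times> 'a set \<times> ('a \<Rightarrow> 'a)) list \<Rightarrow> 'a set \<Rightarrow> bool" where
  "is_Fcore G D K \<longleftrightarrow> Fcore_cand G D K \<and> (\<forall>K'. Fcore_cand G D K' \<longrightarrow> K' \<subseteq> K)"

definition simple_data :: "('a, 'b) monoid_scheme \<Rightarrow> (nat \<times> 'a set \<times> ('a \<Rightarrow> 'a)) list \<Rightarrow> bool" where
  "simple_data G D \<longleftrightarrow> is_Fcore G D {\<one>\<^bsub>G\<^esub>}"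

definition right_transversal :: "('a, 'b) monoid_scheme \<Rightarrow> 'a set \<Rightarrow> 'a set \<Rightarrow> bool" where
  "right_transversal G H T \<longleftrightarrow> T \<subseteq> carrier G \<and>
     (\<forall>g \<in> carrier G. \<exists>!t. t \<in> T \<and> H #>\<^bsub>G\<^esub> t = H #>\<^bsub>G\<^esub> g)"

definition alphabet :: "(nat \<times> 'a set \<times> ('a \<Rightarrow> 'a)) list \<Rightarrow> (nat \<Rightarrow> 'a set) \<Rightarrow> (nat \<times> 'a) set" where
  "alphabet D Ts = {(i, t). i < length D \<and> t \<in> Ts i}"

(* Action of g^\<phi> on words (vertices of the tree); maps on the right:
   (x w)^{g^\<phi>} = x^{g^\<sigma>} w^{(\<theta>_i(g,x)^{f_i})^\<phi>} *)
fun phi_act :: "('a, 'b) monoid_scheme \<Rightarrow> (nat \<times> 'a set \<times> ('a \<Rightarrow> 'a)) list \<Rightarrow> (nat \<Rightarrow> 'a set)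
                 \<Rightarrow> 'a \<Rightarrow> (nat \<times> 'a) list \<Rightarrow> (nat \<times> 'a) list" where
  "phi_act G D Ts g [] = []"
| "phi_act G D Ts g (x # w) =
     (let i = fst x; t = snd x; H = fst (snd (D!i)); f = snd (snd (D!i));
          t' = (THE t'. t' \<in> Ts i \<and> H #>\<^bsub>G\<^esub> t' = H #>\<^bsub>G\<^esub> (t \<otimes>\<^bsub>G\<^esub> g))
      in (i, t') # phi_act G D Ts (f (t \<otimes>\<^bsub>G\<^esub> g \<otimes>\<^bsub>G\<^esub> inv\<^bsub>G\<^esub> t')) w)"

definition section_at :: "'x set \<Rightarrow> ('x list \<Rightarrow> 'x list) \<Rightarrow> 'x list \<Rightarrow> ('x list \<Rightarrow> 'x list)" where
  "section_at Y a u = restrict (\<lambda>w. drop (length u) (a (u @ w))) {w. set w \<subseteq> Y}"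

definition finite_state_aut :: "'x set \<Rightarrow> ('x list \<Rightarrow> 'x list) \<Rightarrow> bool" where
  "finite_state_aut Y a \<longleftrightarrow> finite {section_at Y a u | u. set u \<subseteq> Y}"

definition finite_state_data :: "('a, 'b) monoid_scheme \<Rightarrow> (nat \<times> 'a set \<times> ('a \<Rightarrow> 'a)) list \<Rightarrow> bool" where
  "finite_state_data G D \<longleftrightarrow> (\<exists>Ts. (\<forall>i < length D. right_transversal G (fst (snd (D!i))) (Ts i)) \<and>
      (\<forall>g \<in> carrier G. finite_state_aut (alphabet D Ts) (phi_act G D Ts g)))"

(* G^s and H^s, indices 0..s-1 *)
definition power_group :: "('a, 'b) monoid_scheme \<Rightarrow> nat \<Rightarrow> (nat \<Rightarrow> 'a) monoid" where
  "power_group G s = product_group {..<s} (\<lambda>_. G)"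

definition power_set :: "'a set \<Rightarrow> nat \<Rightarrow> (nat \<Rightarrow> 'a) set" where
  "power_set H s = (\<Pi>\<^sub>E k\<in>{..<s}. H)"

(* \<rho>_j (0-indexed j): component k gets f_{(j+k) mod s} *)
definition rho_shift :: "nat \<Rightarrow> (nat \<Rightarrow> 'a \<Rightarrow> 'a) \<Rightarrow> nat \<Rightarrow> (nat \<Rightarrow> 'a) \<Rightarrow> (nat \<Rightarrow> 'a)" where
  "rho_shift s f j h = (\<lambda>k\<in>{..<s}. f ((j + k) mod s) (h k))"

definition tau_shift :: "nat \<Rightarrow> (nat \<Rightarrow> 'a) \<Rightarrow> (nat \<Rightarrow> 'a)" where
  "tau_shift s g = (\<lambda>k\<in>{..<s}. g ((k + s - 1) mod s))"

end

theory Submission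
  imports Defs
begin

text \<open>
A normal subgroup K of G^s that is invariant
under either data projects, in every coordinate k, onto a normal subgroup of G contained in H and
invariant under all f_i: for the first data because \<rho>_j acts on coordinate k by f_{j+k}, for the second
because \<tau> forces all coordinate projections of K to coincide, after which \<rho> supplies each f_k.
Simplicity of the base data makes every projection, hence K, trivial.

For finite-stateness, every letter of the new alphabet either feeds one base letter into each
coordinate or merely permutes the coordinates. Hence the section of g at a vertex is determined by a
tuple of sections of the coordinates g_k, and there are only finitely many such tuples.
\<close>

lemma r_coset_eq_iff:
  assumes "group G" "subgroup H G" "a \<in> carrier G" "b \<in> carrier G"
  shows "H #>\<^bsub>G\<^esub> a = H #>\<^bsub>G\<^esub> b \<longleftrightarrow> a \<otimes>\<^bsub>G\<^esub> inv\<^bsub>G\<^esub> b \<in> H"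
  using group.rcos_self[OF assms(1,3,2)] group.repr_independence[OF assms(1) _ assms(4,2)]
    subgroup.rcos_module[OF assms(2,1,4,3)] by blast

definition transversal_rep :: "('a, 'b) monoid_scheme \<Rightarrow> 'a set \<Rightarrow> 'a set \<Rightarrow> 'a \<Rightarrow> 'a" where
  "transversal_rep G H T g = (THE t. t \<in> T \<and> H #>\<^bsub>G\<^esub> t = H #>\<^bsub>G\<^esub> g)"

lemma transversal_rep:
  assumes "right_transversal G H T" "g \<in> carrier G"
  shows "transversal_rep G H T g \<in> T" "H #>\<^bsub>G\<^esub> transversal_rep G H T g = H #>\<^bsub>G\<^esub> g"
  using theI'[of "\<lambda>t. t \<in> T \<and> H #>\<^bsub>G\<^esub> t = H #>\<^bsub>G\<^esub> g"] assms
  unfolding right_transversal_def transversal_rep_def by blast+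

lemma transversal_rep_eqI:
  assumes "right_transversal G H T" "g \<in> carrier G" "t \<in> T" "H #>\<^bsub>G\<^esub> t = H #>\<^bsub>G\<^esub> g"
  shows "transversal_rep G H T g = t"
  using assms transversal_rep[OF assms(1,2)] unfolding right_transversal_def by blast

lemma bij_betw_transversal_rcosets:
  assumes "group G" "right_transversal G H T"
  shows "bij_betw (\<lambda>t. H #>\<^bsub>G\<^esub> t) T (rcosets\<^bsub>G\<^esub> H)"
proof -
  have T: "T \<subseteq> carrier G" using assms(2) by (simp add: right_transversal_def)
  have "inj_on (\<lambda>t. H #>\<^bsub>G\<^esub> t) T"
  proof (rule inj_onI)
    fix x y assume "x \<in> T" "y \<in> T" "H #>\<^bsub>G\<^esub> x = H #>\<^bsub>G\<^esub> y"
    then show "x = y" using assms(2) T unfolding right_transversal_def by blast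
  qed
  moreover have "(\<lambda>t. H #>\<^bsub>G\<^esub> t) ` T = rcosets\<^bsub>G\<^esub> H"
  proof
    show "(\<lambda>t. H #>\<^bsub>G\<^esub> t) ` T \<subseteq> rcosets\<^bsub>G\<^esub> H"
      using T unfolding RCOSETS_def by blast
    show "rcosets\<^bsub>G\<^esub> H \<subseteq> (\<lambda>t. H #>\<^bsub>G\<^esub> t) ` T"
      using assms(2) unfolding RCOSETS_def right_transversal_def by (auto simp: image_iff) metis
  qed
  ultimately show ?thesis by (simp add: bij_betw_def)
qed

lemma right_transversal_carrier:
  assumes "group G"
  shows "right_transversal G (carrier G) {\<one>\<^bsub>G\<^esub>}"
  using subgroup.rcos_const[OF group.subgroup_self[OF assms] assms] monoid.one_closed[OF group.is_monoid[OF assms]]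
  by (auto simp: right_transversal_def)

lemma G_dataI:
  assumes "group G"
    and "\<And>i. i < length D \<Longrightarrow> subgroup (fst (snd (D!i))) G
           \<and> right_transversal G (fst (snd (D!i))) (T i) \<and> finite (T i) \<and> card (T i) = fst (D!i)
           \<and> snd (snd (D!i)) \<in> hom (G\<lparr>carrier := fst (snd (D!i))\<rparr>) G"
  shows "G_data G D"
proof -
  have "finite (rcosets\<^bsub>G\<^esub> (fst (snd (D!i)))) \<and> card (rcosets\<^bsub>G\<^esub> (fst (snd (D!i)))) = fst (D!i)"
    if "i < length D" for i
    using assms(2)[OF that] bij_betw_transversal_rcosets[OF assms(1)]
    by (metis bij_betw_finite bij_betw_same_card)
  then show ?thesis using assms unfolding G_data_def by blast
qed

lemma group_power_group: "group G \<Longrightarrow> group (power_group G s)"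
  by (simp add: power_group_def)

lemma carrier_power_group [simp]: "carrier (power_group G s) = (\<Pi>\<^sub>E k\<in>{..<s}. carrier G)"
  by (simp add: power_group_def)

lemma mult_power_group [simp]: "x \<otimes>\<^bsub>power_group G s\<^esub> y = (\<lambda>k\<in>{..<s}. x k \<otimes>\<^bsub>G\<^esub> y k)"
  by (simp add: power_group_def)

lemma one_power_group [simp]: "\<one>\<^bsub>power_group G s\<^esub> = (\<lambda>k\<in>{..<s}. \<one>\<^bsub>G\<^esub>)"
  by (simp add: power_group_def)

lemma inv_power_group [simp]:
  "group G \<Longrightarrow> x \<in> (\<Pi>\<^sub>E k\<in>{..<s}. carrier G) \<Longrightarrow>
     inv\<^bsub>power_group G s\<^esub> x = (\<lambda>k\<in>{..<s}. inv\<^bsub>G\<^esub> x k)"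
  by (simp add: power_group_def)

lemma subgroup_power_set: "group G \<Longrightarrow> subgroup H G \<Longrightarrow> subgroup (power_set H s) (power_group G s)"
  unfolding power_group_def power_set_def by (subst PiE_subgroup_product_group) auto

lemma r_coset_power_set:
  assumes "group G" "subgroup H G" "a \<in> carrier (power_group G s)"
  shows "power_set H s #>\<^bsub>power_group G s\<^esub> a = (\<Pi>\<^sub>E k\<in>{..<s}. H #>\<^bsub>G\<^esub> a k)"
proof (intro equalityI subsetI)
  fix x assume "x \<in> power_set H s #>\<^bsub>power_group G s\<^esub> a"
  then obtain h where "h \<in> power_set H s" "x = h \<otimes>\<^bsub>power_group G s\<^esub> a"
    unfolding r_coset_def by blast
  then show "x \<in> (\<Pi>\<^sub>E k\<in>{..<s}. H #>\<^bsub>G\<^esub> a k)"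
    unfolding r_coset_def power_set_def by auto
next
  fix x assume x: "x \<in> (\<Pi>\<^sub>E k\<in>{..<s}. H #>\<^bsub>G\<^esub> a k)"
  have ak: "a k \<in> carrier G" if "k < s" for k using assms(3) that by auto
  have xk: "x k \<in> H #>\<^bsub>G\<^esub> a k" "x k \<in> carrier G" if "k < s" for k
    using x that subgroup.elemrcos_carrier[OF assms(2,1) ak[OF that]] by auto
  define h where "h = (\<lambda>k\<in>{..<s}. x k \<otimes>\<^bsub>G\<^esub> inv\<^bsub>G\<^esub> a k)"
  have "h \<in> power_set H s"
    using subgroup.rcos_module_imp[OF assms(2,1) ak xk(1)] by (simp add: h_def power_set_def)
  moreover have "x = h \<otimes>\<^bsub>power_group G s\<^esub> a"
  proof (rule extensionalityI[where A="{..<s}"])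
    show "x \<in> extensional {..<s}" using x by (simp add: PiE_iff)
    interpret G: group G by fact
    show "x k = (h \<otimes>\<^bsub>power_group G s\<^esub> a) k" if "k \<in> {..<s}" for k
      using that xk ak by (simp add: h_def G.m_assoc)
  qed simp
  ultimately show "x \<in> power_set H s #>\<^bsub>power_group G s\<^esub> a"
    by (auto simp: r_coset_def)
qed

lemma r_coset_power_set_eq_iff:
  assumes "group G" "subgroup H G" "a \<in> carrier (power_group G s)" "b \<in> carrier (power_group G s)"
  shows "power_set H s #>\<^bsub>power_group G s\<^esub> a = power_set H s #>\<^bsub>power_group G s\<^esub> b
     \<longleftrightarrow> (\<forall>k<s. H #>\<^bsub>G\<^esub> a k = H #>\<^bsub>G\<^esub> b k)"
proof -
  have "H #>\<^bsub>G\<^esub> c k \<noteq> {}" if "c \<in> carrier (power_group G s)" "k \<in> {..<s}" for c k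
    using group.rcos_self[OF assms(1) _ assms(2), of "c k"] that by auto
  then have "(\<exists>k\<in>{..<s}. H #>\<^bsub>G\<^esub> a k = {}) \<longleftrightarrow> False" by (meson assms(3))
  then show ?thesis
    by (simp add: r_coset_power_set[OF assms(1-3)] r_coset_power_set[OF assms(1,2,4)] PiE_eq_iff Ball_def)
qed

lemma right_transversal_power_set:
  assumes "group G" "subgroup H G" "\<forall>k<s. right_transversal G H (T k)"
  shows "right_transversal (power_group G s) (power_set H s) (\<Pi>\<^sub>E k\<in>{..<s}. T k)"
    and "g \<in> carrier (power_group G s) \<Longrightarrow>
      transversal_rep (power_group G s) (power_set H s) (\<Pi>\<^sub>E k\<in>{..<s}. T k) g
        = (\<lambda>k\<in>{..<s}. transversal_rep G H (T k) (g k))"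
proof -
  have TC: "(\<Pi>\<^sub>E k\<in>{..<s}. T k) \<subseteq> carrier (power_group G s)"
    using assms(3) by (fastforce simp: right_transversal_def PiE_iff)
  have rep: "(\<lambda>k\<in>{..<s}. transversal_rep G H (T k) (g k)) \<in> (\<Pi>\<^sub>E k\<in>{..<s}. T k)
      \<and> power_set H s #>\<^bsub>power_group G s\<^esub> (\<lambda>k\<in>{..<s}. transversal_rep G H (T k) (g k))
        = power_set H s #>\<^bsub>power_group G s\<^esub> g"
    if g: "g \<in> carrier (power_group G s)" for g
  proof -
    let ?t = "\<lambda>k\<in>{..<s}. transversal_rep G H (T k) (g k)"
    have t: "?t \<in> (\<Pi>\<^sub>E k\<in>{..<s}. T k)"
      using g assms(3) by (auto simp: PiE_iff intro: transversal_rep(1))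
    have "H #>\<^bsub>G\<^esub> ?t k = H #>\<^bsub>G\<^esub> g k" if "k < s" for k
      using transversal_rep(2)[OF assms(3)[rule_format, OF that]] g that by auto
    then show ?thesis
      using t r_coset_power_set_eq_iff[OF assms(1,2) subsetD[OF TC t] g] by simp
  qed
  have unique: "t = t'" if "t \<in> (\<Pi>\<^sub>E k\<in>{..<s}. T k)" "t' \<in> (\<Pi>\<^sub>E k\<in>{..<s}. T k)"
      "power_set H s #>\<^bsub>power_group G s\<^esub> t = power_set H s #>\<^bsub>power_group G s\<^esub> t'" for t t'
  proof (rule PiE_ext[OF that(1,2)])
    fix k assume k: "k \<in> {..<s}"
    have "H #>\<^bsub>G\<^esub> t k = H #>\<^bsub>G\<^esub> t' k"
      using that k r_coset_power_set_eq_iff[OF assms(1,2) subsetD[OF TC that(1)] subsetD[OF TC that(2)]] by blast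
    moreover have "t k \<in> T k" "t' k \<in> T k" "t' k \<in> carrier G"
      using that k subsetD[OF TC that(2)] by auto
    ultimately show "t k = t' k"
      using assms(3) k unfolding right_transversal_def by blast
  qed
  show trans: "right_transversal (power_group G s) (power_set H s) (\<Pi>\<^sub>E k\<in>{..<s}. T k)"
    unfolding right_transversal_def
  proof (intro conjI ballI TC)
    fix g assume g: "g \<in> carrier (power_group G s)"
    show "\<exists>!t. t \<in> (\<Pi>\<^sub>E k\<in>{..<s}. T k) \<and>
      power_set H s #>\<^bsub>power_group G s\<^esub> t = power_set H s #>\<^bsub>power_group G s\<^esub> g"
      using rep[OF g] unique by (intro ex1I[of _ "\<lambda>k\<in>{..<s}. transversal_rep G H (T k) (g k)"]) auto
  qed
  show "transversal_rep (power_group G s) (power_set H s) (\<Pi>\<^sub>E k\<in>{..<s}. T k) g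
        = (\<lambda>k\<in>{..<s}. transversal_rep G H (T k) (g k))" if "g \<in> carrier (power_group G s)"
    using rep[OF that] by (intro transversal_rep_eqI[OF trans that]) simp_all
qed

lemma rho_shift_hom:
  assumes "0 < s" "\<forall>i<s. f i \<in> hom (G\<lparr>carrier := H\<rparr>) G"
  shows "rho_shift s f j \<in> hom ((power_group G s)\<lparr>carrier := power_set H s\<rparr>) (power_group G s)"
proof (rule homI)
  have fk: "f ((j + k) mod s) \<in> hom (G\<lparr>carrier := H\<rparr>) G" for k
    using assms by simp
  show "rho_shift s f j x \<in> carrier (power_group G s)"
    if "x \<in> carrier ((power_group G s)\<lparr>carrier := power_set H s\<rparr>)" for x
    using that hom_in_carrier[OF fk] by (auto simp: rho_shift_def power_set_def)
  show "rho_shift s f j (x \<otimes>\<^bsub>(power_group G s)\<lparr>carrier := power_set H s\<rparr>\<^esub> y)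
      = rho_shift s f j x \<otimes>\<^bsub>power_group G s\<^esub> rho_shift s f j y"
    if "x \<in> carrier ((power_group G s)\<lparr>carrier := power_set H s\<rparr>)"
       "y \<in> carrier ((power_group G s)\<lparr>carrier := power_set H s\<rparr>)" for x y
    using that hom_mult[OF fk] by (auto simp: rho_shift_def power_set_def PiE_iff intro!: restrict_ext)
qed

lemma tau_shift_hom:
  assumes "0 < s"
  shows "tau_shift s \<in> hom ((power_group G s)\<lparr>carrier := carrier (power_group G s)\<rparr>) (power_group G s)"
proof (rule homI)
  have md: "(k + s - 1) mod s \<in> {..<s}" for k using assms by simp
  show "tau_shift s x \<in> carrier (power_group G s)"
    if "x \<in> carrier ((power_group G s)\<lparr>carrier := carrier (power_group G s)\<rparr>)" for x
    using that md unfolding tau_shift_def by (simp add: PiE_iff)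
  show "tau_shift s (x \<otimes>\<^bsub>(power_group G s)\<lparr>carrier := carrier (power_group G s)\<rparr>\<^esub> y)
      = tau_shift s x \<otimes>\<^bsub>power_group G s\<^esub> tau_shift s y" for x y
    using md unfolding tau_shift_def by (simp add: restrict_def fun_eq_iff)
qed

lemma group_hom_component:
  assumes "group G" "k < s"
  shows "group_hom (power_group G s) G (\<lambda>x. x k)"
  unfolding group_hom_def group_hom_axioms_def
  using assms group_power_group[OF assms(1)] by (auto intro!: homI)

lemma component_image_carrier:
  assumes "k < s"
  shows "(\<lambda>x. x k) ` carrier (power_group G s) = carrier G"
proof
  show "(\<lambda>x. x k) ` carrier (power_group G s) \<subseteq> carrier G" using assms by auto
  show "carrier G \<subseteq> (\<lambda>x. x k) ` carrier (power_group G s)"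
  proof
    fix a assume a: "a \<in> carrier G"
    then have "(\<lambda>i\<in>{..<s}. a) \<in> carrier (power_group G s)" by simp
    then show "a \<in> (\<lambda>x. x k) ` carrier (power_group G s)"
      using assms by (intro image_eqI[where x = "\<lambda>i\<in>{..<s}. a"]) simp_all
  qed
qed

lemma normal_component_image:
  assumes "group G" "K \<lhd> power_group G s" "k < s"
  shows "(\<lambda>x. x k) ` K \<lhd> G"
  using normal.surj_hom_normal_subgroup[OF assms(2) group_hom_component[OF assms(1,3)]
      component_image_carrier[OF assms(3)]] .

lemma Fcore_cand_one:
  assumes "G_data G D"
  shows "Fcore_cand G D {\<one>\<^bsub>G\<^esub>}"
proof -
  have grp: "group G" using assms by (simp add: G_data_def)
  have "\<one>\<^bsub>G\<^esub> \<in> fst (snd (D ! i)) \<and> snd (snd (D ! i)) \<one>\<^bsub>G\<^esub> = \<one>\<^bsub>G\<^esub>" if "i < length D" for i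
  proof -
    have sub: "subgroup (fst (snd (D ! i))) G"
      and hom: "snd (snd (D ! i)) \<in> hom (G\<lparr>carrier := fst (snd (D ! i))\<rparr>) G"
      using assms that by (simp_all add: G_data_def)
    then show ?thesis
      using subgroup.one_closed[OF sub] hom_one[OF hom group.subgroup_imp_group[OF grp sub] grp] by simp
  qed
  then show ?thesis
    unfolding Fcore_cand_def using group.triv_subgroup[OF grp] group.one_is_normal[OF grp] by auto
qed

lemma simple_dataI:
  assumes "G_data G D" "\<And>K. Fcore_cand G D K \<Longrightarrow> K \<subseteq> {\<one>\<^bsub>G\<^esub>}"
  shows "simple_data G D"
  unfolding simple_data_def is_Fcore_def using Fcore_cand_one[OF assms(1)] assms(2) by blast

lemma cyclic_chain_eq:
  fixes P :: "nat \<Rightarrow> 'a set"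
  assumes "\<And>k. k < s \<Longrightarrow> P k \<subseteq> P (Suc k mod s)" "k < s"
  shows "P k = P 0"
proof -
  have "P k \<subseteq> P ((k + n) mod s)" if "k < s" for k n
  proof (induction n)
    case 0 then show ?case using that by simp
  next
    case (Suc n)
    have "P ((k + n) mod s) \<subseteq> P (Suc ((k + n) mod s) mod s)" using that by (intro assms(1)) simp
    then show ?case using Suc.IH by (simp add: mod_Suc_eq)
  qed
  from this[of 0 k] this[of k "s - k"] show ?thesis using assms(2) by simp
qed

definition phi_letter :: "('a, 'b) monoid_scheme \<Rightarrow> (nat \<times> 'a set \<times> ('a \<Rightarrow> 'a)) list \<Rightarrow> (nat \<Rightarrow> 'a set)
    \<Rightarrow> 'a \<Rightarrow> nat \<times> 'a \<Rightarrow> nat \<times> 'a" where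
  "phi_letter G D Ts g x =
     (fst x, transversal_rep G (fst (snd (D ! fst x))) (Ts (fst x)) (snd x \<otimes>\<^bsub>G\<^esub> g))"

definition phi_next :: "('a, 'b) monoid_scheme \<Rightarrow> (nat \<times> 'a set \<times> ('a \<Rightarrow> 'a)) list \<Rightarrow> (nat \<Rightarrow> 'a set)
    \<Rightarrow> 'a \<Rightarrow> nat \<times> 'a \<Rightarrow> 'a" where
  "phi_next G D Ts g x =
     snd (snd (D ! fst x)) (snd x \<otimes>\<^bsub>G\<^esub> g \<otimes>\<^bsub>G\<^esub> inv\<^bsub>G\<^esub> (snd (phi_letter G D Ts g x)))"

lemma phi_act_Cons [simp]:
  "phi_act G D Ts g (x # w) = phi_letter G D Ts g x # phi_act G D Ts (phi_next G D Ts g x) w"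
  by (simp add: phi_letter_def phi_next_def transversal_rep_def Let_def)

declare phi_act.simps(2) [simp del]

lemma length_phi_act [simp]: "length (phi_act G D Ts g w) = length w"
  by (induction w arbitrary: g) simp_all

definition phi_state :: "('a, 'b) monoid_scheme \<Rightarrow> (nat \<times> 'a set \<times> ('a \<Rightarrow> 'a)) list \<Rightarrow> (nat \<Rightarrow> 'a set)
    \<Rightarrow> 'a \<Rightarrow> (nat \<times> 'a) list \<Rightarrow> 'a" where
  "phi_state G D Ts g w = fold (\<lambda>x h. phi_next G D Ts h x) w g"

lemma phi_state_simps [simp]:
  "phi_state G D Ts g [] = g"
  "phi_state G D Ts g (x # w) = phi_state G D Ts (phi_next G D Ts g x) w"
  "phi_state G D Ts g (u @ w) = phi_state G D Ts (phi_state G D Ts g u) w"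
  by (simp_all add: phi_state_def)

lemma phi_act_append:
  "phi_act G D Ts g (u @ w) = phi_act G D Ts g u @ phi_act G D Ts (phi_state G D Ts g u) w"
  by (induction u arbitrary: g) simp_all

definition state_action :: "('a, 'b) monoid_scheme \<Rightarrow> (nat \<times> 'a set \<times> ('a \<Rightarrow> 'a)) list \<Rightarrow> (nat \<Rightarrow> 'a set)
    \<Rightarrow> (nat \<times> 'a) set \<Rightarrow> 'a \<Rightarrow> (nat \<times> 'a) list \<Rightarrow> (nat \<times> 'a) list" where
  "state_action G D Ts A g = restrict (phi_act G D Ts g) {w. set w \<subseteq> A}"

lemma section_at_phi_act:
  "section_at A (phi_act G D Ts g) u = state_action G D Ts A (phi_state G D Ts g u)"
  unfolding section_at_def state_action_def by (simp add: phi_act_append)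

lemma finite_state_aut_phi_act_iff:
  "finite_state_aut A (phi_act G D Ts g)
     \<longleftrightarrow> finite ((\<lambda>u. state_action G D Ts A (phi_state G D Ts g u)) ` {u. set u \<subseteq> A})"
  unfolding finite_state_aut_def section_at_phi_act by (simp add: setcompr_eq_image)

lemma state_action_step:
  assumes "state_action G D Ts A a = state_action G D Ts A b" "x \<in> A"
  shows "phi_letter G D Ts a x = phi_letter G D Ts b x"
    and "state_action G D Ts A (phi_next G D Ts a x) = state_action G D Ts A (phi_next G D Ts b x)"
proof -
  have eq: "phi_act G D Ts a (x # v) = phi_act G D Ts b (x # v)" if "set v \<subseteq> A" for v
    using fun_cong[OF assms(1), of "x # v"] that assms(2) by (simp add: state_action_def)
  show "phi_letter G D Ts a x = phi_letter G D Ts b x"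
    using eq[of "[]"] by simp
  show "state_action G D Ts A (phi_next G D Ts a x) = state_action G D Ts A (phi_next G D Ts b x)"
    unfolding state_action_def using eq by (intro restrict_ext) simp
qed

lemma phi_act_eq_if_bisimilar:
  assumes "R a b" "set w \<subseteq> Y"
    and "\<And>a b y. R a b \<Longrightarrow> y \<in> Y \<Longrightarrow>
           phi_letter G D Ts a y = phi_letter G D Ts b y \<and> R (phi_next G D Ts a y) (phi_next G D Ts b y)"
  shows "phi_act G D Ts a w = phi_act G D Ts b w"
  using assms(1,2) by (induction w arbitrary: a b) (simp_all add: assms(3))

lemma finite_image_if_factors:
  assumes "finite (c ` A)" "\<And>x y. x \<in> A \<Longrightarrow> y \<in> A \<Longrightarrow> c x = c y \<Longrightarrow> r x = r y"
  shows "finite (r ` A)"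
proof -
  have "r ` A \<subseteq> (\<lambda>z. r (SOME x. x \<in> A \<and> c x = z)) ` c ` A"
  proof
    fix z assume "z \<in> r ` A"
    then obtain x where x: "x \<in> A" "z = r x" by blast
    then have "(SOME y. y \<in> A \<and> c y = c x) \<in> A \<and> c (SOME y. y \<in> A \<and> c y = c x) = c x"
      by (intro someI) blast
    then have "z = r (SOME y. y \<in> A \<and> c y = c x)"
      using x assms(2) by metis
    then show "z \<in> (\<lambda>z. r (SOME x. x \<in> A \<and> c x = z)) ` c ` A"
      using x(1) by blast
  qed
  then show ?thesis using assms(1) by (rule finite_subset[OF _ finite_imageI])
qed

lemma phi_next_closed:
  assumes "G_data G D" "\<forall>i<length D. right_transversal G (fst (snd (D ! i))) (Ts i)"
    and "g \<in> carrier G" "x \<in> alphabet D Ts"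
  shows "phi_next G D Ts g x \<in> carrier G"
proof -
  obtain i t where x: "x = (i, t)" "i < length D" "t \<in> Ts i"
    using assms(4) unfolding alphabet_def by (cases x) blast
  let ?H = "fst (snd (D ! i))"
  have grp: "group G" and sub: "subgroup ?H G"
    and hom: "snd (snd (D ! i)) \<in> hom (G\<lparr>carrier := ?H\<rparr>) G"
    using assms(1) x(2) unfolding G_data_def by blast+
  have tr: "right_transversal G ?H (Ts i)" using assms(2) x(2) by blast
  interpret G: group G by (rule grp)
  have "t \<in> carrier G" using tr x(3) unfolding right_transversal_def by blast
  then have tg: "t \<otimes>\<^bsub>G\<^esub> g \<in> carrier G" using assms(3) by simp
  let ?r = "transversal_rep G ?H (Ts i) (t \<otimes>\<^bsub>G\<^esub> g)"
  have rC: "?r \<in> carrier G"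
    using transversal_rep(1)[OF tr tg] tr unfolding right_transversal_def by blast
  have "t \<otimes>\<^bsub>G\<^esub> g \<otimes>\<^bsub>G\<^esub> inv\<^bsub>G\<^esub> ?r \<in> ?H"
    using transversal_rep(2)[OF tr tg] r_coset_eq_iff[OF grp sub tg rC] by simp
  then show ?thesis
    using hom_in_carrier[OF hom] x(1) by (simp add: phi_next_def phi_letter_def)
qed

locale componentwise_automaton =
  fixes G' :: "(nat \<Rightarrow> 'a, 'c) monoid_scheme" and D' :: "(nat \<times> (nat \<Rightarrow> 'a) set \<times> ((nat \<Rightarrow> 'a) \<Rightarrow> (nat \<Rightarrow> 'a))) list"
    and Ts' :: "nat \<Rightarrow> (nat \<Rightarrow> 'a) set" and B :: "(nat \<times> (nat \<Rightarrow> 'a)) set"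
    and G :: "('a, 'b) monoid_scheme" and D :: "(nat \<times> 'a set \<times> ('a \<Rightarrow> 'a)) list"
    and Ts :: "nat \<Rightarrow> 'a set" and A :: "(nat \<times> 'a) set"
    and s :: nat and P :: "(nat \<Rightarrow> 'a) \<Rightarrow> bool"
    and read :: "nat \<times> (nat \<Rightarrow> 'a) \<Rightarrow> nat \<Rightarrow> nat \<times> 'a"
    and permuting :: "(nat \<times> (nat \<Rightarrow> 'a)) set" and perm :: "nat \<Rightarrow> nat"
  assumes closed: "P h \<Longrightarrow> y \<in> B \<Longrightarrow> P (phi_next G' D' Ts' h y)"
    and read_in: "y \<in> B \<Longrightarrow> y \<notin> permuting \<Longrightarrow> k < s \<Longrightarrow> read y k \<in> A"
    and read_letter: "P h \<Longrightarrow> y \<in> B \<Longrightarrow> y \<notin> permuting \<Longrightarrow>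
      phi_letter G' D' Ts' h y = (fst y, \<lambda>k\<in>{..<s}. snd (phi_letter G D Ts (h k) (read y k)))"
    and read_next: "P h \<Longrightarrow> y \<in> B \<Longrightarrow> y \<notin> permuting \<Longrightarrow>
      phi_next G' D' Ts' h y = (\<lambda>k\<in>{..<s}. phi_next G D Ts (h k) (read y k))"
    and perm_less: "k < s \<Longrightarrow> perm k < s"
    and permuting_letter: "P h \<Longrightarrow> y \<in> permuting \<Longrightarrow> phi_letter G' D' Ts' h y = y"
    and permuting_next: "P h \<Longrightarrow> y \<in> permuting \<Longrightarrow> phi_next G' D' Ts' h y = (\<lambda>k\<in>{..<s}. h (perm k))"
begin

abbreviation components_agree :: "(nat \<Rightarrow> 'a) \<Rightarrow> (nat \<Rightarrow> 'a) \<Rightarrow> bool" where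
  "components_agree a b \<equiv> \<forall>k<s. state_action G D Ts A (a k) = state_action G D Ts A (b k)"

lemma components_agree_step:
  assumes "P a" "P b" "components_agree a b" "y \<in> B"
  shows "phi_letter G' D' Ts' a y = phi_letter G' D' Ts' b y"
    and "components_agree (phi_next G' D' Ts' a y) (phi_next G' D' Ts' b y)"
proof -
  have "phi_letter G' D' Ts' a y = phi_letter G' D' Ts' b y
      \<and> components_agree (phi_next G' D' Ts' a y) (phi_next G' D' Ts' b y)"
  proof (cases "y \<in> permuting")
    case False
    have "k < s \<Longrightarrow> phi_letter G D Ts (a k) (read y k) = phi_letter G D Ts (b k) (read y k)"
      and "k < s \<Longrightarrow> state_action G D Ts A (phi_next G D Ts (a k) (read y k))
          = state_action G D Ts A (phi_next G D Ts (b k) (read y k))" for k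
      using state_action_step[of G D Ts A "a k" "b k" "read y k"] assms(3,4) read_in False by simp_all
    then show ?thesis
      using assms read_letter read_next False by (simp cong: restrict_cong)
  next
    case True
    then show ?thesis
      using assms(1-3) permuting_letter permuting_next perm_less by simp
  qed
  then show "phi_letter G' D' Ts' a y = phi_letter G' D' Ts' b y"
    and "components_agree (phi_next G' D' Ts' a y) (phi_next G' D' Ts' b y)" by blast+
qed

lemma state_action_eq_if_components_agree:
  assumes "P a" "P b" "components_agree a b"
  shows "state_action G' D' Ts' B a = state_action G' D' Ts' B b"
  unfolding state_action_def
proof (rule restrict_ext)
  fix w assume "w \<in> {w. set w \<subseteq> B}"
  then show "phi_act G' D' Ts' a w = phi_act G' D' Ts' b w"
  proof (intro phi_act_eq_if_bisimilar[where R = "\<lambda>a b. P a \<and> P b \<and> components_agree a b" and Y = B],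
      goal_cases)
    case 1 then show ?case using assms by blast
  next
    case 2 then show ?case by simp
  next
    case (3 a' b' y)
    then show ?case
      using closed[of a' y] closed[of b' y] components_agree_step[of a' b' y] by simp
  qed
qed

lemma components_reachable:
  fixes g :: "nat \<Rightarrow> 'a"
  defines "reach \<equiv> {phi_state G D Ts (g k) v | k v. k < s \<and> set v \<subseteq> A}"
  assumes "P h" "\<forall>k<s. h k \<in> reach" "set u \<subseteq> B"
  shows "P (phi_state G' D' Ts' h u) \<and> (\<forall>k<s. phi_state G' D' Ts' h u k \<in> reach)"
  using assms(2-4)
proof (induction u arbitrary: h)
  case (Cons y u)
  have y: "y \<in> B" using Cons.prems(3) by simp
  have "phi_next G D Ts r x \<in> reach" if "r \<in> reach" "x \<in> A" for r x
  proof -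
    obtain k v where "k < s" "set v \<subseteq> A" "r = phi_state G D Ts (g k) v"
      using \<open>r \<in> reach\<close> unfolding reach_def by blast
    moreover have "phi_next G D Ts (phi_state G D Ts (g k) v) x = phi_state G D Ts (g k) (v @ [x])"
      by simp
    ultimately show ?thesis using \<open>x \<in> A\<close> unfolding reach_def by fastforce
  qed
  then have "\<forall>k<s. phi_next G' D' Ts' h y k \<in> reach"
    using Cons.prems(1,2) y read_next read_in permuting_next perm_less
    by (cases "y \<in> permuting") simp_all
  then show ?case
    using Cons.IH[of "phi_next G' D' Ts' h y"] closed[OF Cons.prems(1) y] Cons.prems(3) by simp
qed simp

theorem finite_state_aut:
  assumes "P g" "\<forall>k<s. finite_state_aut A (phi_act G D Ts (g k))"
  shows "finite_state_aut B (phi_act G' D' Ts' g)"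
proof -
  let ?SA = "state_action G D Ts A"
  define reach where "reach = {phi_state G D Ts (g k) v | k v. k < s \<and> set v \<subseteq> A}"
  let ?states = "(\<lambda>u. phi_state G' D' Ts' g u) ` {u. set u \<subseteq> B}"
  have "g k \<in> reach" if "k < s" for k
  proof -
    have "g k = phi_state G D Ts (g k) []" by simp
    then show ?thesis using that unfolding reach_def by (intro CollectI exI[of _ k] exI[of _ "[]"]) simp
  qed
  then have "P (phi_state G' D' Ts' g u) \<and> (\<forall>k<s. phi_state G' D' Ts' g u k \<in> reach)"
    if "set u \<subseteq> B" for u
    using components_reachable[where g = g and h = g and u = u, folded reach_def] assms(1) that by blast
  then have states: "P h \<and> (\<forall>k<s. h k \<in> reach)" if "h \<in> ?states" for h
    using that by blast
  have "?SA ` reach = (\<Union>k<s. (\<lambda>v. ?SA (phi_state G D Ts (g k) v)) ` {v. set v \<subseteq> A})"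
    unfolding reach_def by blast
  then have "finite (?SA ` reach)"
    using assms(2) by (simp add: finite_state_aut_phi_act_iff)
  then have "finite ((\<lambda>h. \<lambda>k\<in>{..<s}. ?SA (h k)) ` ?states)"
    using states by (intro finite_subset[OF _ finite_PiE[of "{..<s}" "\<lambda>_. ?SA ` reach"]]) auto
  then have "finite (state_action G' D' Ts' B ` ?states)"
  proof (rule finite_image_if_factors)
    fix a b assume "a \<in> ?states" "b \<in> ?states"
      and eq: "(\<lambda>k\<in>{..<s}. ?SA (a k)) = (\<lambda>k\<in>{..<s}. ?SA (b k))"
    have "components_agree a b"
      using fun_cong[OF eq] by (metis lessThan_iff restrict_apply')
    then show "state_action G' D' Ts' B a = state_action G' D' Ts' B b"
      using states \<open>a \<in> ?states\<close> \<open>b \<in> ?states\<close> state_action_eq_if_components_agree by blast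
  qed
  then show ?thesis
    unfolding finite_state_aut_phi_act_iff by (simp add: image_image)
qed

end

locale power_data =
  fixes G :: "('a, 'b) monoid_scheme" and H :: "'a set" and s m :: nat
    and f :: "nat \<Rightarrow> 'a \<Rightarrow> 'a" and Ts :: "nat \<Rightarrow> 'a set"
  assumes group: "group G" and subgroup: "subgroup H G" and s_pos: "0 < s"
    and index: "finite (rcosets\<^bsub>G\<^esub> H)" "card (rcosets\<^bsub>G\<^esub> H) = m"
    and homs: "\<forall>i<s. f i \<in> hom (G\<lparr>carrier := H\<rparr>) G"
    and transversals: "\<forall>i<s. right_transversal G H (Ts i)"
begin

abbreviation base_data :: "(nat \<times> 'a set \<times> ('a \<Rightarrow> 'a)) list" where
  "base_data \<equiv> map (\<lambda>i. (m, H, f i)) [0..<s]"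

abbreviation shift_data :: "(nat \<times> (nat \<Rightarrow> 'a) set \<times> ((nat \<Rightarrow> 'a) \<Rightarrow> (nat \<Rightarrow> 'a))) list" where
  "shift_data \<equiv> map (\<lambda>j. (m ^ s, power_set H s, rho_shift s f j)) [0..<s]"

abbreviation rotation_data :: "(nat \<times> (nat \<Rightarrow> 'a) set \<times> ((nat \<Rightarrow> 'a) \<Rightarrow> (nat \<Rightarrow> 'a))) list" where
  "rotation_data \<equiv> [(m ^ s, power_set H s, rho_shift s f 0), (1, carrier (power_group G s), tau_shift s)]"

abbreviation shift_transversal :: "nat \<Rightarrow> (nat \<Rightarrow> 'a) set" where
  "shift_transversal j \<equiv> \<Pi>\<^sub>E k\<in>{..<s}. Ts ((j + k) mod s)"

abbreviation rotation_transversal :: "nat \<Rightarrow> (nat \<Rightarrow> 'a) set" where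
  "rotation_transversal i \<equiv> if i = 0 then shift_transversal 0 else {\<one>\<^bsub>power_group G s\<^esub>}"

lemma group_power: "group (power_group G s)"
  using group by (rule group_power_group)

lemma shift_transversal:
  "right_transversal (power_group G s) (power_set H s) (shift_transversal j)"
  using right_transversal_power_set(1)[OF group subgroup] transversals s_pos by simp

lemma card_shift_transversal: "finite (shift_transversal j) \<and> card (shift_transversal j) = m ^ s"
proof -
  have "finite (Ts i) \<and> card (Ts i) = m" if "i < s" for i
    using bij_betw_transversal_rcosets[OF group transversals[rule_format, OF that]] index
    by (metis bij_betw_finite bij_betw_same_card)
  then show ?thesis using s_pos by (simp add: card_PiE finite_PiE)
qed

lemma rotation_transversal:
  assumes "i < length rotation_data"
  shows "right_transversal (power_group G s) (fst (snd (rotation_data ! i))) (rotation_transversal i)"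
proof -
  consider "i = 0" | "i = 1" using assms by fastforce
  then show ?thesis
  proof cases
    case 1
    then show ?thesis using shift_transversal[of 0] by simp
  next
    case 2
    then show ?thesis using right_transversal_carrier[OF group_power] by simp
  qed
qed

lemma G_data_shift: "G_data (power_group G s) shift_data"
  by (rule G_dataI[OF group_power, where T = shift_transversal])
    (use shift_transversal card_shift_transversal subgroup_power_set[OF group subgroup]
       rho_shift_hom[OF s_pos homs] in simp)

lemma G_data_rotation: "G_data (power_group G s) rotation_data"
proof (rule G_dataI[OF group_power, where T = rotation_transversal])
  fix i assume i: "i < length rotation_data"
  then consider "i = 0" | "i = 1" by fastforce
  then show "subgroup (fst (snd (rotation_data ! i))) (power_group G s)
      \<and> right_transversal (power_group G s) (fst (snd (rotation_data ! i))) (rotation_transversal i)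
      \<and> finite (rotation_transversal i) \<and> card (rotation_transversal i) = fst (rotation_data ! i)
      \<and> snd (snd (rotation_data ! i))
          \<in> hom ((power_group G s)\<lparr>carrier := fst (snd (rotation_data ! i))\<rparr>) (power_group G s)"
  proof cases
    case 1
    then show ?thesis
      using rotation_transversal[OF i] card_shift_transversal[of 0] subgroup_power_set[OF group subgroup]
        rho_shift_hom[OF s_pos homs] by simp
  next
    case 2
    then show ?thesis
      using rotation_transversal[OF i] tau_shift_hom[OF s_pos] group.subgroup_self[OF group_power]
      by simp
  qed
qed

lemma subset_one_if_component_images_invariant:
  assumes simple: "simple_data G base_data"
    and K: "K \<lhd> power_group G s" "K \<subseteq> power_set H s"
    and inv: "\<And>i k. i < s \<Longrightarrow> k < s \<Longrightarrow> f i ` (\<lambda>x. x k) ` K \<subseteq> (\<lambda>x. x k) ` K"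
  shows "K \<subseteq> {\<one>\<^bsub>power_group G s\<^esub>}"
proof
  fix x assume x: "x \<in> K"
  have "(\<lambda>x. x k) ` K \<subseteq> {\<one>\<^bsub>G\<^esub>}" if k: "k < s" for k
  proof -
    have "(\<lambda>x. x k) ` K \<subseteq> H" using K(2) k by (auto simp: power_set_def)
    then have "Fcore_cand G base_data ((\<lambda>x. x k) ` K)"
      unfolding Fcore_cand_def
      using normal_component_image[OF group K(1) k] normal_imp_subgroup inv[OF _ k] s_pos by auto
    then show ?thesis using simple unfolding simple_data_def is_Fcore_def by blast
  qed
  then have "x k = \<one>\<^bsub>G\<^esub>" if "k < s" for k using x that by blast
  moreover have "x \<in> carrier (power_group G s)"
    using x normal_imp_subgroup[OF K(1)] subgroup.subset by blast
  ultimately show "x \<in> {\<one>\<^bsub>power_group G s\<^esub>}"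
    by (auto simp: PiE_iff intro!: extensionalityI[where A = "{..<s}"])
qed

lemma simple_data_shift:
  assumes "simple_data G base_data"
  shows "simple_data (power_group G s) shift_data"
proof (rule simple_dataI[OF G_data_shift])
  fix K assume "Fcore_cand (power_group G s) shift_data K"
  then have "K \<lhd> power_group G s" and "K \<subseteq> power_set H s"
    and rho: "\<And>j. j < s \<Longrightarrow> rho_shift s f j ` K \<subseteq> K"
    using s_pos unfolding Fcore_cand_def by auto
  moreover have "f i ` (\<lambda>x. x k) ` K \<subseteq> (\<lambda>x. x k) ` K" if "i < s" "k < s" for i k
  proof
    fix z assume "z \<in> f i ` (\<lambda>x. x k) ` K"
    then obtain y where y: "y \<in> K" "z = f i (y k)" by blast
    define j where "j = (i + s - k) mod s"
    have "(j + k) mod s = (i + s - k + k) mod s" by (simp add: j_def mod_add_left_eq)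
    also have "\<dots> = i" using that by simp
    finally have "rho_shift s f j y k = z" using y that by (simp add: rho_shift_def)
    moreover have "rho_shift s f j y \<in> K" using rho[of j] y s_pos by (auto simp: j_def)
    ultimately show "z \<in> (\<lambda>x. x k) ` K" by (intro image_eqI) auto
  qed
  ultimately show "K \<subseteq> {\<one>\<^bsub>power_group G s\<^esub>}"
    by (intro subset_one_if_component_images_invariant[OF assms])
qed

lemma simple_data_rotation:
  assumes "simple_data G base_data"
  shows "simple_data (power_group G s) rotation_data"
proof (rule simple_dataI[OF G_data_rotation])
  fix K assume "Fcore_cand (power_group G s) rotation_data K"
  then have normal: "K \<lhd> power_group G s" and "K \<subseteq> power_set H s"
    and rho: "rho_shift s f 0 ` K \<subseteq> K" and tau: "tau_shift s ` K \<subseteq> K"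
    unfolding Fcore_cand_def by (auto simp: less_Suc_eq)
  let ?P = "\<lambda>k. (\<lambda>x. x k) ` K"
  have "?P k \<subseteq> ?P (Suc k mod s)" if k: "k < s" for k
  proof
    fix z assume "z \<in> ?P k"
    then obtain y where y: "y \<in> K" "z = y k" by blast
    have "(Suc k mod s + s - 1) mod s = k"
      using k by (cases "Suc k = s") simp_all
    then have "tau_shift s y (Suc k mod s) = z" using y k s_pos by (simp add: tau_shift_def)
    moreover have "tau_shift s y \<in> K" using tau y by blast
    ultimately show "z \<in> ?P (Suc k mod s)" by (intro image_eqI) auto
  qed
  then have "?P k = ?P 0" if "k < s" for k using that by (rule cyclic_chain_eq)
  moreover have "f i ` ?P i \<subseteq> ?P i" if "i < s" for i
  proof
    fix z assume "z \<in> f i ` ?P i"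
    then obtain y where y: "y \<in> K" "z = f i (y i)" by blast
    then have "rho_shift s f 0 y i = z" using that by (simp add: rho_shift_def)
    moreover have "rho_shift s f 0 y \<in> K" using rho y by blast
    ultimately show "z \<in> ?P i" by (intro image_eqI) auto
  qed
  ultimately show "K \<subseteq> {\<one>\<^bsub>power_group G s\<^esub>}"
    using normal \<open>K \<subseteq> power_set H s\<close>
    by (intro subset_one_if_component_images_invariant[OF assms]) metis+
qed

lemma shift_letter_step:
  assumes "fst (snd (D' ! i)) = power_set H s" "snd (snd (D' ! i)) = rho_shift s f j"
    and "Ts' i = shift_transversal j" "\<tau> \<in> shift_transversal j" "h \<in> carrier (power_group G s)"
  shows "phi_letter (power_group G s) D' Ts' h (i, \<tau>)
           = (i, \<lambda>k\<in>{..<s}. snd (phi_letter G base_data Ts (h k) ((j + k) mod s, \<tau> k)))"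
    and "phi_next (power_group G s) D' Ts' h (i, \<tau>)
           = (\<lambda>k\<in>{..<s}. phi_next G base_data Ts (h k) ((j + k) mod s, \<tau> k))"
proof -
  have md: "(j + k) mod s < s" for k using s_pos by simp
  have T: "\<forall>k<s. right_transversal G H (Ts ((j + k) mod s))" using transversals md by blast
  have TC: "Ts i \<subseteq> carrier G" if "i < s" for i
    using transversals that by (simp add: right_transversal_def)
  have \<tau>C: "\<tau> k \<in> carrier G" if "k < s" for k using assms(4) TC[OF md] that by auto
  let ?\<sigma> = "\<tau> \<otimes>\<^bsub>power_group G s\<^esub> h"
  interpret G: group G by (rule group)
  have hC: "h k \<in> carrier G" if "k < s" for k using assms(5) that by auto
  have "\<tau> k \<otimes>\<^bsub>G\<^esub> h k \<in> carrier G" if "k < s" for k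
    using that by (intro G.m_closed \<tau>C hC)
  then have \<sigma>C: "?\<sigma> \<in> carrier (power_group G s)"
    unfolding mult_power_group carrier_power_group restrict_PiE_iff by simp
  let ?r = "\<lambda>k\<in>{..<s}. transversal_rep G H (Ts ((j + k) mod s)) (\<tau> k \<otimes>\<^bsub>G\<^esub> h k)"
  have rep: "transversal_rep (power_group G s) (power_set H s) (shift_transversal j) ?\<sigma> = ?r"
    using right_transversal_power_set(2)[OF group subgroup T \<sigma>C] by (simp cong: restrict_cong)
  have "?r k \<in> carrier G" if "k < s" for k
    using transversal_rep(1)[OF T[rule_format, OF that] G.m_closed[OF \<tau>C[OF that] hC[OF that]]]
      TC[OF md] that by auto
  then have rC: "?r \<in> carrier (power_group G s)" by auto
  have base: "base_data ! ((j + k) mod s) = (m, H, f ((j + k) mod s))" for k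
    using md by simp
  show "phi_letter (power_group G s) D' Ts' h (i, \<tau>)
           = (i, \<lambda>k\<in>{..<s}. snd (phi_letter G base_data Ts (h k) ((j + k) mod s, \<tau> k)))"
    using assms rep by (simp add: phi_letter_def base cong: restrict_cong)
  show "phi_next (power_group G s) D' Ts' h (i, \<tau>)
           = (\<lambda>k\<in>{..<s}. phi_next G base_data Ts (h k) ((j + k) mod s, \<tau> k))"
    using assms rep rC \<sigma>C group
    by (simp add: phi_next_def phi_letter_def base rho_shift_def cong: restrict_cong)
qed

lemma rotation_letter_step:
  assumes "h \<in> carrier (power_group G s)"
  shows "phi_letter (power_group G s) rotation_data rotation_transversal h (1, \<one>\<^bsub>power_group G s\<^esub>)
           = (1, \<one>\<^bsub>power_group G s\<^esub>)"
    and "phi_next (power_group G s) rotation_data rotation_transversal h (1, \<one>\<^bsub>power_group G s\<^esub>)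
           = tau_shift s h"
proof -
  interpret GS: group "power_group G s" by (rule group_power)
  have "carrier (power_group G s) #>\<^bsub>power_group G s\<^esub> \<one>\<^bsub>power_group G s\<^esub> = carrier (power_group G s)"
    and "carrier (power_group G s) #>\<^bsub>power_group G s\<^esub> h = carrier (power_group G s)"
    using assms by (simp_all only: subgroup.rcos_const[OF GS.subgroup_self group_power] GS.one_closed)
  then have "transversal_rep (power_group G s) (carrier (power_group G s)) {\<one>\<^bsub>power_group G s\<^esub>} h
      = \<one>\<^bsub>power_group G s\<^esub>"
    by (intro transversal_rep_eqI[OF right_transversal_carrier[OF group_power] assms]) simp_all
  then show "phi_letter (power_group G s) rotation_data rotation_transversal h (1, \<one>\<^bsub>power_group G s\<^esub>)
           = (1, \<one>\<^bsub>power_group G s\<^esub>)"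
    and "phi_next (power_group G s) rotation_data rotation_transversal h (1, \<one>\<^bsub>power_group G s\<^esub>)
           = tau_shift s h"
    using GS.l_one[OF assms] GS.r_one[OF assms]
    by (simp_all add: phi_letter_def phi_next_def
        del: mult_power_group one_power_group carrier_power_group)
qed

lemma finite_state_data_shift:
  assumes "\<forall>g\<in>carrier G. finite_state_aut (alphabet base_data Ts) (phi_act G base_data Ts g)"
  shows "finite_state_data (power_group G s) shift_data"
  unfolding finite_state_data_def
proof (intro exI conjI ballI allI impI)
  show "right_transversal (power_group G s) (fst (snd (shift_data ! j))) (shift_transversal j)"
    if "j < length shift_data" for j
    using that shift_transversal by simp
  interpret componentwise_automaton "power_group G s" shift_data shift_transversal
    "alphabet shift_data shift_transversal" G base_data Ts "alphabet base_data Ts" s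
    "\<lambda>h. h \<in> carrier (power_group G s)" "\<lambda>y k. ((fst y + k) mod s, snd y k)" "{}" id
  proof (unfold_locales, goal_cases)
    case (1 h y)
    then show ?case using G_data_shift shift_transversal by (intro phi_next_closed) simp_all
  next
    case (2 y k)
    obtain j \<tau> where "y = (j, \<tau>)" "j < s" "\<tau> \<in> shift_transversal j"
      using 2(1) unfolding alphabet_def by (cases y) auto
    then show ?case using 2(3) s_pos by (simp add: alphabet_def PiE_iff)
  next
    case (3 h y)
    then show ?case using shift_letter_step(1)[of shift_data "fst y" "fst y"] by (auto simp: alphabet_def)
  next
    case (4 h y)
    then show ?case using shift_letter_step(2)[of shift_data "fst y" "fst y"] by (auto simp: alphabet_def)
  qed simp_all
  show "finite_state_aut (alphabet shift_data shift_transversal)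
      (phi_act (power_group G s) shift_data shift_transversal g)"
    if "g \<in> carrier (power_group G s)" for g
    using that assms by (intro finite_state_aut) auto
qed

lemma rotation_alphabet_cases:
  assumes "y \<in> alphabet rotation_data rotation_transversal"
  obtains "y = (1, \<one>\<^bsub>power_group G s\<^esub>)" | \<tau> where "y = (0, \<tau>)" "\<tau> \<in> shift_transversal 0"
proof -
  obtain i \<tau> where y: "y = (i, \<tau>)" "i < 2" "\<tau> \<in> rotation_transversal i"
    using assms unfolding alphabet_def by (cases y) auto
  then consider "i = 0" | "i = 1" by fastforce
  then show ?thesis
  proof cases
    case 1
    then have "\<tau> \<in> shift_transversal 0" using y(3) by (simp only: simp_thms if_True)
    then show ?thesis using that(2) y(1) 1 by blast
  next
    case 2
    then show ?thesis using that(1) y by simp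
  qed
qed

lemma finite_state_data_rotation:
  assumes "\<forall>g\<in>carrier G. finite_state_aut (alphabet base_data Ts) (phi_act G base_data Ts g)"
  shows "finite_state_data (power_group G s) rotation_data"
  unfolding finite_state_data_def
proof (intro exI conjI ballI allI impI)
  show "right_transversal (power_group G s) (fst (snd (rotation_data ! i))) (rotation_transversal i)"
    if "i < length rotation_data" for i
    using rotation_transversal[OF that] .
  interpret componentwise_automaton "power_group G s" rotation_data rotation_transversal
    "alphabet rotation_data rotation_transversal" G base_data Ts "alphabet base_data Ts" s
    "\<lambda>h. h \<in> carrier (power_group G s)" "\<lambda>y k. ((fst y + k) mod s, snd y k)"
    "{(1, \<one>\<^bsub>power_group G s\<^esub>)}" "\<lambda>k. (k + s - 1) mod s"
  proof (unfold_locales, goal_cases)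
    case (1 h y)
    then show ?case using G_data_rotation rotation_transversal by (intro phi_next_closed) simp_all
  next
    case (2 y k)
    obtain \<tau> where "y = (0, \<tau>)" "\<tau> \<in> shift_transversal 0"
      using 2(1) by (cases rule: rotation_alphabet_cases) (use 2(2) in auto)
    then show ?case using 2 by (simp add: alphabet_def PiE_iff)
  next
    case (3 h y)
    obtain \<tau> where "y = (0, \<tau>)" "\<tau> \<in> shift_transversal 0"
      using 3(2) by (cases rule: rotation_alphabet_cases) (use 3(3) in auto)
    then show ?case
      using 3 shift_letter_step(1)[of rotation_data 0 0 rotation_transversal \<tau> h] by simp
  next
    case (4 h y)
    obtain \<tau> where "y = (0, \<tau>)" "\<tau> \<in> shift_transversal 0"
      using 4(2) by (cases rule: rotation_alphabet_cases) (use 4(3) in auto)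
    then show ?case
      using 4 shift_letter_step(2)[of rotation_data 0 0 rotation_transversal \<tau> h] by simp
  next
    case (5 k)
    then show ?case by simp
  next
    case (6 h y)
    then show ?case using rotation_letter_step(1) by simp
  next
    case (7 h y)
    then show ?case using rotation_letter_step(2) by (simp add: tau_shift_def)
  qed
  show "finite_state_aut (alphabet rotation_data rotation_transversal)
      (phi_act (power_group G s) rotation_data rotation_transversal g)"
    if "g \<in> carrier (power_group G s)" for g
    using that assms by (intro finite_state_aut) auto
qed

end

theorem mainTheorem6:
  fixes G :: "('a, 'b) monoid_scheme" and H :: "'a set" and m s :: nat
    and f :: "nat \<Rightarrow> 'a \<Rightarrow> 'a"
  assumes "group G" and "s \<ge> 1"
    and "subgroup H G" and "finite (rcosets\<^bsub>G\<^esub> H)" and "card (rcosets\<^bsub>G\<^esub> H) = m"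
    and "\<forall>i < s. f i \<in> hom (G\<lparr>carrier := H\<rparr>) G"
    and "G_data G (map (\<lambda>i. (m, H, f i)) [0..<s])"
    and "simple_data G (map (\<lambda>i. (m, H, f i)) [0..<s])"
    and "finite_state_data G (map (\<lambda>i. (m, H, f i)) [0..<s])"
  shows
    "G_data (power_group G s) (map (\<lambda>j. (m ^ s, power_set H s, rho_shift s f j)) [0..<s])
     \<and> simple_data (power_group G s) (map (\<lambda>j. (m ^ s, power_set H s, rho_shift s f j)) [0..<s])
     \<and> finite_state_data (power_group G s) (map (\<lambda>j. (m ^ s, power_set H s, rho_shift s f j)) [0..<s])
     \<and> G_data (power_group G s) [(m ^ s, power_set H s, rho_shift s f 0), (1, carrier (power_group G s), tau_shift s)]
     \<and> simple_data (power_group G s) [(m ^ s, power_set H s, rho_shift s f 0), (1, carrier (power_group G s), tau_shift s)]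
     \<and> finite_state_data (power_group G s) [(m ^ s, power_set H s, rho_shift s f 0), (1, carrier (power_group G s), tau_shift s)]"
proof -
  obtain Ts where Ts: "\<forall>i<s. right_transversal G H (Ts i)"
    and fs: "\<forall>g\<in>carrier G. finite_state_aut (alphabet (map (\<lambda>i. (m, H, f i)) [0..<s]) Ts)
                (phi_act G (map (\<lambda>i. (m, H, f i)) [0..<s]) Ts g)"
    using assms(9) unfolding finite_state_data_def by auto
  interpret power_data G H s m f Ts
    using assms(1-6) Ts by (simp add: power_data_def)
  show ?thesis
    using G_data_shift simple_data_shift[OF assms(8)] finite_state_data_shift[OF fs]
      G_data_rotation simple_data_rotation[OF assms(8)] finite_state_data_rotation[OF fs]
    by blast
qed

end
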